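(* Let $0<p_0,p<\infty$, $1<q_0<q<\infty$ with $q/p=q_0/p_0$. Let $f,g$ be measurable functions whose supports have finite measure, with $f,g\in L(p,q)$, such that the integral $\int_0^\infty (f^*(t)^{q_0}-g^*(t)^{q_0})\,d(t^{q_0/p_0})$ exists and is $\ge0$. Suppose there exists $\tau_1\in[0,\infty)$ such that \[ \int_\tau^\infty\lambda_g(s)^{q_0/p_0}\,ds\le\int_\tau^\infty\lambda_f(s)^{q_0/p_0}\,ds\quad\text{for }\tau\ge\tau_1, \] \[ \int_\tau^\infty\lambda_f(s)^{q_0/p_0}\,ds\le\int_\tau^\infty\lambda_g(s)^{q_0/p_0}\,ds\quad\text{for }\tau\le\tau_1. \] Then $\|g\|_{L(p,q)}\le\|f\|_{L(p,q)}$.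
   Context: $\lambda_f(\tau)=\mu\{|f|>\tau\}$ and $f^*(s)=\inf\{\tau>0:\lambda_f(\tau)\le s\}$ for $s>0$. For $a>0$, $\int_0^\infty h(t)\,d(t^a)$ means $a\int_0^\infty h(t)t^{a-1}\,dt$. For $0<p,q<\infty$ the Lorentz quasi-norm is $\|f\|_{L(p,q)}=\bigl(\int_0^\infty f^*(s)^q\,d(s^{q/p})\bigr)^{1/q}=\bigl(\int_0^\infty\lambda_f(s)^{q/p}\,d(s^q)\bigr)^{1/q}$, and $L(p,q)$ is the set of $f$ with finite quasi-norm. *)

theory Defs
  imports "HOL-Analysis.Analysis"
begin

definition distr_fun :: "'a measure \<Rightarrow> ('a \<Rightarrow> real) \<Rightarrow> real \<Rightarrow> real" where
  "distr_fun M f \<tau> = measure M {x \<in> space M. \<bar>f x\<bar> > \<tau>}"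

definition rearr :: "'a measure \<Rightarrow> ('a \<Rightarrow> real) \<Rightarrow> real \<Rightarrow> real" where
  "rearr M f s = Inf {\<tau>. \<tau> > 0 \<and> distr_fun M f \<tau> \<le> s}"

definition lorentz_integral :: "'a measure \<Rightarrow> real \<Rightarrow> real \<Rightarrow> ('a \<Rightarrow> real) \<Rightarrow> ennreal" where
  "lorentz_integral M p q f =
     (\<integral>\<^sup>+ s. ennreal (rearr M f s powr q * ((q / p) * s powr (q / p - 1)))
        * indicator {0<..} s \<partial>lborel)"

definition in_lorentz :: "'a measure \<Rightarrow> real \<Rightarrow> real \<Rightarrow> ('a \<Rightarrow> real) \<Rightarrow> bool" where
  "in_lorentz M p q f \<longleftrightarrow> f \<in> borel_measurable M \<and> lorentz_integral M p q f < \<infinity>"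

text \<open>Lorentz quasi-norm (meaningful when the function lies in L(p,q)).\<close>
definition lorentz_norm :: "'a measure \<Rightarrow> real \<Rightarrow> real \<Rightarrow> ('a \<Rightarrow> real) \<Rightarrow> real" where
  "lorentz_norm M p q f = enn2real (lorentz_integral M p q f) powr (1 / q)"

end

theory Submission
  imports Defs
begin

text \<open>With r = q/p = q0/p0, layer-cake and Fubini turn the a-th Lorentz integral into
  the integral of T(t) = integral of lambda^r over [t, infinity) against the weight
  w_a(t) = a (a - 1) t^(a - 2). The hypothesis says that the integral of w_q0 (T_f - T_g) is
  nonnegative, and T_f - T_g changes sign from nonpositive to nonnegative at tau1. Since
  w_q / w_q0 = c t^(q - q0) is increasing, it is at most c tau1^(q - q0) where T_f - T_g is
  negative and at least that where it is positive, so the integral of w_q (T_f - T_g) is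
  nonnegative as well.\<close>

lemma nn_integral_power_density:
  assumes "0 \<le> x" "0 < b" and S: "{0<..<x} \<subseteq> S" "S \<subseteq> {0..x}"
  shows "(\<integral>\<^sup>+t\<in>S. ennreal (b * t powr (b - 1)) \<partial>lborel) = ennreal (x powr b)"
proof -
  have "((\<lambda>t. t powr (b - 1)) has_integral (x powr (b - 1 + 1) / (b - 1 + 1))) {0..x}"
    using assms by (intro has_integral_powr_from_0) auto
  then have "((\<lambda>t. b * t powr (b - 1)) has_integral (b * (x powr b / b))) {0..x}"
    by (intro has_integral_mult_right) simp
  then have "((\<lambda>t. b * t powr (b - 1)) has_integral (x powr b)) {0..x}"
    using assms by simp
  then have Icc: "(\<integral>\<^sup>+t\<in>{0..x}. ennreal (b * t powr (b - 1)) \<partial>lborel) = ennreal (x powr b)"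
    using assms by (intro nn_integral_has_integral_lebesgue') auto
  have "AE t in lborel. t \<noteq> 0" "AE t in lborel. t \<noteq> x"
    by (rule AE_lborel_singleton)+
  then have "AE t in lborel. t \<in> S \<longleftrightarrow> t \<in> {0..x}"
    by eventually_elim (use S in auto)
  then have "(\<integral>\<^sup>+t\<in>S. ennreal (b * t powr (b - 1)) \<partial>lborel)
      = (\<integral>\<^sup>+t\<in>{0..x}. ennreal (b * t powr (b - 1)) \<partial>lborel)"
    by (intro nn_integral_cong_AE) (auto simp: indicator_def)
  with Icc show ?thesis by simp
qed

lemma layer_cake_generalized_inverse:
  fixes u v :: "real \<Rightarrow> real"
  assumes v_meas: "(\<lambda>t. v t * indicator {0<..} t) \<in> borel_measurable borel"
    and u_nonneg: "\<And>s. 0 < s \<Longrightarrow> 0 \<le> u s" and v_nonneg: "\<And>t. 0 < t \<Longrightarrow> 0 \<le> v t"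
    and inverse: "\<And>s t. 0 < s \<Longrightarrow> 0 < t \<Longrightarrow> t < u s \<longleftrightarrow> s < v t"
    and a_pos: "0 < a" and r_pos: "0 < r"
  shows "(\<integral>\<^sup>+s\<in>{0<..}. ennreal (u s powr a * (r * s powr (r - 1))) \<partial>lborel)
       = (\<integral>\<^sup>+t\<in>{0<..}. ennreal (a * t powr (a - 1) * v t powr r) \<partial>lborel)"
proof -
  define K where "K = (\<lambda>s t. if 0 < s \<and> 0 < t \<and> s < v t * indicator {0<..} t
      then ennreal (a * t powr (a - 1)) * ennreal (r * s powr (r - 1)) else 0)"
  have K_meas: "case_prod K \<in> borel_measurable (lborel \<Otimes>\<^sub>M lborel)"
    unfolding K_def using v_meas by measurable
  have slice_s: "ennreal (u s powr a * (r * s powr (r - 1))) * indicator {0<..} s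
      = (\<integral>\<^sup>+t. K s t \<partial>lborel)" for s
  proof (cases "0 < s")
    case True
    have "(\<integral>\<^sup>+t. K s t \<partial>lborel)
        = (\<integral>\<^sup>+t\<in>{0<..<u s}. ennreal (a * t powr (a - 1)) \<partial>lborel) * ennreal (r * s powr (r - 1))"
      using True inverse
      by (subst nn_integral_multc[symmetric]) (auto intro!: nn_integral_cong simp: K_def indicator_def)
    also have "\<dots> = ennreal (u s powr a * (r * s powr (r - 1)))"
      using True u_nonneg a_pos r_pos by (subst nn_integral_power_density) (auto simp: ennreal_mult)
    finally show ?thesis using True by simp
  qed (simp add: K_def)
  have slice_t: "ennreal (a * t powr (a - 1) * v t powr r) * indicator {0<..} t
      = (\<integral>\<^sup>+s. K s t \<partial>lborel)" for t
  proof (cases "0 < t")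
    case True
    have "(\<integral>\<^sup>+s. K s t \<partial>lborel)
        = (\<integral>\<^sup>+s\<in>{0<..<v t}. ennreal (r * s powr (r - 1)) \<partial>lborel) * ennreal (a * t powr (a - 1))"
      using True
      by (subst nn_integral_multc[symmetric]) (auto intro!: nn_integral_cong simp: K_def indicator_def mult.commute)
    also have "\<dots> = ennreal (a * t powr (a - 1) * v t powr r)"
      using True v_nonneg a_pos r_pos by (subst nn_integral_power_density) (auto simp: ennreal_mult mult.commute)
    finally show ?thesis using True by simp
  qed (simp add: K_def)
  have "(\<integral>\<^sup>+s\<in>{0<..}. ennreal (u s powr a * (r * s powr (r - 1))) \<partial>lborel)
      = (\<integral>\<^sup>+s. (\<integral>\<^sup>+t. K s t \<partial>lborel) \<partial>lborel)"
    by (simp add: slice_s)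
  also have "\<dots> = (\<integral>\<^sup>+t. (\<integral>\<^sup>+s. K s t \<partial>lborel) \<partial>lborel)"
    by (rule lborel_pair.Fubini'[OF K_meas, symmetric])
  also have "\<dots> = (\<integral>\<^sup>+t\<in>{0<..}. ennreal (a * t powr (a - 1) * v t powr r) \<partial>lborel)"
    by (simp add: slice_t)
  finally show ?thesis .
qed

lemma nn_integral_power_weight_eq_tail:
  fixes L :: "real \<Rightarrow> real"
  assumes [measurable]: "L \<in> borel_measurable borel"
    and L_nonneg: "\<And>s. 0 \<le> L s" and a: "1 < a"
  shows "(\<integral>\<^sup>+s\<in>{0<..}. ennreal (a * s powr (a - 1) * L s) \<partial>lborel)
       = (\<integral>\<^sup>+t\<in>{0<..}. ennreal (a * (a - 1) * t powr (a - 2)) * (\<integral>\<^sup>+s\<in>{t..}. ennreal (L s) \<partial>lborel) \<partial>lborel)"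
proof -
  define K where "K = (\<lambda>t s. if 0 < t \<and> t \<le> s
      then ennreal (a * (a - 1) * t powr (a - 2)) * ennreal (L s) else 0)"
  have K_meas: "case_prod K \<in> borel_measurable (lborel \<Otimes>\<^sub>M lborel)"
    unfolding K_def by measurable
  have slice_s: "ennreal (a * s powr (a - 1) * L s) * indicator {0<..} s = (\<integral>\<^sup>+t. K t s \<partial>lborel)" for s
  proof (cases "0 < s")
    case True
    have "(\<integral>\<^sup>+t. K t s \<partial>lborel)
        = (\<integral>\<^sup>+t\<in>{0<..s}. ennreal ((a - 1) * t powr ((a - 1) - 1)) \<partial>lborel) * ennreal (a * L s)"
      using a L_nonneg
      by (subst nn_integral_multc[symmetric])
        (auto intro!: nn_integral_cong simp: K_def indicator_def ennreal_mult[symmetric] algebra_simps)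
    also have "\<dots> = ennreal (a * s powr (a - 1) * L s)"
      using True a L_nonneg
      by (subst nn_integral_power_density[of s "a - 1"]) (auto simp: ennreal_mult[symmetric] mult.commute mult.left_commute)
    finally show ?thesis using True by simp
  next
    case False
    then have "K t s = 0" for t by (simp add: K_def)
    with False show ?thesis by simp
  qed
  have slice_t: "ennreal (a * (a - 1) * t powr (a - 2)) * (\<integral>\<^sup>+s\<in>{t..}. ennreal (L s) \<partial>lborel)
      * indicator {0<..} t = (\<integral>\<^sup>+s. K t s \<partial>lborel)" for t
  proof (cases "0 < t")
    case True
    have "(\<integral>\<^sup>+s. K t s \<partial>lborel)
        = (\<integral>\<^sup>+s. ennreal (a * (a - 1) * t powr (a - 2)) * (ennreal (L s) * indicator {t..} s) \<partial>lborel)"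
      using True by (intro nn_integral_cong) (simp add: K_def indicator_def)
    also have "\<dots> = ennreal (a * (a - 1) * t powr (a - 2)) * (\<integral>\<^sup>+s\<in>{t..}. ennreal (L s) \<partial>lborel)"
      by (rule nn_integral_cmult) measurable
    finally show ?thesis using True by simp
  qed (simp add: K_def)
  have "(\<integral>\<^sup>+s\<in>{0<..}. ennreal (a * s powr (a - 1) * L s) \<partial>lborel)
      = (\<integral>\<^sup>+s. (\<integral>\<^sup>+t. K t s \<partial>lborel) \<partial>lborel)"
    by (simp add: slice_s)
  also have "\<dots> = (\<integral>\<^sup>+t. (\<integral>\<^sup>+s. K t s \<partial>lborel) \<partial>lborel)"
    by (rule lborel_pair.Fubini'[OF K_meas])
  also have "\<dots> = (\<integral>\<^sup>+t\<in>{0<..}. ennreal (a * (a - 1) * t powr (a - 2)) * (\<integral>\<^sup>+s\<in>{t..}. ennreal (L s) \<partial>lborel) \<partial>lborel)"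
    by (simp add: slice_t)
  finally show ?thesis .
qed

lemma set_nn_integral_add_diff_swap:
  fixes F G w :: "'a \<Rightarrow> ennreal"
  assumes [measurable]: "F \<in> borel_measurable N" "G \<in> borel_measurable N" "w \<in> borel_measurable N"
    "S \<in> sets N"
  shows "(\<integral>\<^sup>+t\<in>S. w t * F t \<partial>N) + (\<integral>\<^sup>+t\<in>S. w t * (G t - F t) \<partial>N)
    = (\<integral>\<^sup>+t\<in>S. w t * G t \<partial>N) + (\<integral>\<^sup>+t\<in>S. w t * (F t - G t) \<partial>N)"
proof -
  have "F t + (G t - F t) = G t + (F t - G t)" for t
    by (cases "F t \<le> G t") (auto simp: add_diff_self_ennreal)
  then have "w t * F t * indicator S t + w t * (G t - F t) * indicator S t
      = w t * G t * indicator S t + w t * (F t - G t) * indicator S t" for t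
    by (metis distrib_left distrib_right)
  then show ?thesis
    by (simp add: nn_integral_add[symmetric])
qed

lemma set_nn_integral_mono_on_nonzero:
  fixes w w' H :: "'a \<Rightarrow> ennreal"
  assumes "\<And>t. t \<in> S \<Longrightarrow> H t \<noteq> 0 \<Longrightarrow> w t \<le> w' t"
  shows "(\<integral>\<^sup>+t\<in>S. w t * H t \<partial>N) \<le> (\<integral>\<^sup>+t\<in>S. w' t * H t \<partial>N)"
proof (rule nn_integral_mono)
  fix t
  show "w t * H t * indicator S t \<le> w' t * H t * indicator S t"
    using assms[of t] by (cases "t \<in> S"; cases "H t = 0") (auto intro: mult_right_mono)
qed

text \<open>Split G - F into its positive and negative parts: the weight ratio v / u is at most K
  where G exceeds F and at least K where F exceeds G.\<close>
lemma nn_integral_weight_comparison_sign_change: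
  fixes F G u v :: "'a::linorder \<Rightarrow> ennreal" and \<tau> :: 'a and K :: ennreal
  assumes [measurable]: "F \<in> borel_measurable N" "G \<in> borel_measurable N"
      "u \<in> borel_measurable N" "v \<in> borel_measurable N" "S \<in> sets N"
    and finite: "\<And>t. t \<in> S \<Longrightarrow> F t < \<infinity>" "\<And>t. t \<in> S \<Longrightarrow> G t < \<infinity>"
    and above: "\<And>t. t \<in> S \<Longrightarrow> \<tau> \<le> t \<Longrightarrow> G t \<le> F t \<and> K * u t \<le> v t"
    and below: "\<And>t. t \<in> S \<Longrightarrow> t \<le> \<tau> \<Longrightarrow> F t \<le> G t \<and> v t \<le> K * u t"
    and u_le: "(\<integral>\<^sup>+t\<in>S. u t * G t \<partial>N) \<le> (\<integral>\<^sup>+t\<in>S. u t * F t \<partial>N)"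
    and u_finite: "(\<integral>\<^sup>+t\<in>S. u t * F t \<partial>N) < \<infinity>"
    and v_finite: "(\<integral>\<^sup>+t\<in>S. v t * G t \<partial>N) < \<infinity>"
  shows "(\<integral>\<^sup>+t\<in>S. v t * G t \<partial>N) \<le> (\<integral>\<^sup>+t\<in>S. v t * F t \<partial>N)"
proof -
  define excess where "excess w H H' = (\<integral>\<^sup>+t\<in>S. w t * (H t - H' t) \<partial>N)" for w H H'
  have balance: "(\<integral>\<^sup>+t\<in>S. w t * F t \<partial>N) + excess w G F = (\<integral>\<^sup>+t\<in>S. w t * G t \<partial>N) + excess w F G"
    if "w \<in> borel_measurable N" for w
    unfolding excess_def by (rule set_nn_integral_add_diff_swap[OF assms(1,2) that assms(5)])
  have excess_cmult: "excess (\<lambda>t. K * u t) G F = K * excess u G F"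
    "excess (\<lambda>t. K * u t) F G = K * excess u F G"
    unfolding excess_def by (subst nn_integral_cmult[symmetric]; auto simp: mult.assoc)+
  have "(\<integral>\<^sup>+t\<in>S. u t * F t \<partial>N) + excess u G F \<le> (\<integral>\<^sup>+t\<in>S. u t * F t \<partial>N) + excess u F G"
    unfolding balance[OF assms(3)] using u_le by (rule add_right_mono)
  then have "excess u G F \<le> excess u F G"
    using u_finite by (auto simp: ennreal_add_left_cancel_le)
  have G_excess: "v t \<le> K * u t" if "t \<in> S" "G t - F t \<noteq> 0" for t
  proof -
    have "\<not> \<tau> \<le> t"
      using above[OF that(1)] finite(2)[OF that(1)] that(2) by (auto simp: diff_eq_0_iff_ennreal)
    then show ?thesis using below[OF that(1)] by simp
  qed
  have F_excess: "K * u t \<le> v t" if "t \<in> S" "F t - G t \<noteq> 0" for t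
  proof -
    have "\<not> t \<le> \<tau>"
      using below[OF that(1)] finite(1)[OF that(1)] that(2) by (auto simp: diff_eq_0_iff_ennreal)
    then show ?thesis using above[OF that(1)] by simp
  qed
  have "excess v G F \<le> excess (\<lambda>t. K * u t) G F"
    unfolding excess_def using G_excess by (rule set_nn_integral_mono_on_nonzero)
  also have "\<dots> \<le> excess (\<lambda>t. K * u t) F G"
    unfolding excess_cmult using \<open>excess u G F \<le> excess u F G\<close> by (rule mult_left_mono) simp
  also have "\<dots> \<le> excess v F G"
    unfolding excess_def using F_excess by (rule set_nn_integral_mono_on_nonzero)
  finally have "excess v G F \<le> excess v F G" .
  have "excess v G F < \<infinity>"
    using v_finite unfolding excess_def
    by (rule le_less_trans[rotated]) (intro nn_integral_mono mult_right_mono mult_left_mono; simp)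
  moreover have "excess v G F + (\<integral>\<^sup>+t\<in>S. v t * G t \<partial>N) \<le> excess v G F + (\<integral>\<^sup>+t\<in>S. v t * F t \<partial>N)"
    using balance[OF assms(4)] \<open>excess v G F \<le> excess v F G\<close> by (metis add.commute add_left_mono)
  ultimately show ?thesis
    by (auto simp: ennreal_add_left_cancel_le)
qed

lemma nn_integral_power_weight_le_sign_change:
  fixes F G :: "real \<Rightarrow> ennreal"
  assumes [measurable]: "F \<in> borel_measurable borel" "G \<in> borel_measurable borel"
    and "1 < a" "a < b" "0 \<le> \<tau>"
    and finite: "\<And>t. 0 < t \<Longrightarrow> F t < \<infinity>" "\<And>t. 0 < t \<Longrightarrow> G t < \<infinity>"
    and above: "\<And>t. \<tau> \<le> t \<Longrightarrow> G t \<le> F t"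
    and below: "\<And>t. 0 < t \<Longrightarrow> t \<le> \<tau> \<Longrightarrow> F t \<le> G t"
    and "(\<integral>\<^sup>+t\<in>{0<..}. ennreal (a * (a - 1) * t powr (a - 2)) * G t \<partial>lborel)
      \<le> (\<integral>\<^sup>+t\<in>{0<..}. ennreal (a * (a - 1) * t powr (a - 2)) * F t \<partial>lborel)"
    and "(\<integral>\<^sup>+t\<in>{0<..}. ennreal (a * (a - 1) * t powr (a - 2)) * F t \<partial>lborel) < \<infinity>"
    and "(\<integral>\<^sup>+t\<in>{0<..}. ennreal (b * (b - 1) * t powr (b - 2)) * G t \<partial>lborel) < \<infinity>"
  shows "(\<integral>\<^sup>+t\<in>{0<..}. ennreal (b * (b - 1) * t powr (b - 2)) * G t \<partial>lborel)
      \<le> (\<integral>\<^sup>+t\<in>{0<..}. ennreal (b * (b - 1) * t powr (b - 2)) * F t \<partial>lborel)"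
proof (rule nn_integral_weight_comparison_sign_change[where \<tau> = \<tau>])
  define c where "c = b * (b - 1) / (a * (a - 1))"
  have "0 \<le> c" using assms(3,4) by (simp add: c_def)
  have ratio: "ennreal (b * (b - 1) * t powr (b - 2)) = ennreal (c * t powr (b - a)) * ennreal (a * (a - 1) * t powr (a - 2))"
    if "0 < t" for t
  proof -
    have "t powr (b - 2) = t powr (b - a) * t powr (a - 2)"
      using that by (simp add: powr_add[symmetric])
    then have "b * (b - 1) * t powr (b - 2) = c * t powr (b - a) * (a * (a - 1) * t powr (a - 2))"
      using assms(3) by (simp add: c_def field_simps)
    then show ?thesis
      using assms(3) \<open>0 \<le> c\<close> by (simp add: ennreal_mult[symmetric])
  qed
  let ?K = "ennreal (c * \<tau> powr (b - a))"
  fix t :: real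
  assume "t \<in> {0<..}"
  then have "0 < t" by simp
  show "\<tau> \<le> t \<Longrightarrow> G t \<le> F t \<and> ?K * ennreal (a * (a - 1) * t powr (a - 2)) \<le> ennreal (b * (b - 1) * t powr (b - 2))"
    using above ratio[OF \<open>0 < t\<close>] \<open>0 \<le> c\<close> assms(4,5)
    by (auto intro!: mult_right_mono ennreal_leI mult_left_mono powr_mono2)
  show "t \<le> \<tau> \<Longrightarrow> F t \<le> G t \<and> ennreal (b * (b - 1) * t powr (b - 2)) \<le> ?K * ennreal (a * (a - 1) * t powr (a - 2))"
    using below \<open>0 < t\<close> ratio[OF \<open>0 < t\<close>] \<open>0 \<le> c\<close> assms(4)
    by (auto intro!: mult_right_mono ennreal_leI mult_left_mono powr_mono2)
qed (use assms in auto)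

lemma set_nn_integral_eq_set_integral:
  fixes \<phi> :: "'a \<Rightarrow> real"
  assumes meas: "set_borel_measurable M A \<phi>" and nonneg: "\<And>x. x \<in> A \<Longrightarrow> 0 \<le> \<phi> x"
    and finite: "(\<integral>\<^sup>+x\<in>A. ennreal (\<phi> x) \<partial>M) < \<infinity>"
  shows "set_integrable M A \<phi>" "(\<integral>\<^sup>+x\<in>A. ennreal (\<phi> x) \<partial>M) = ennreal (LINT x:A|M. \<phi> x)"
proof -
  have nonneg': "0 \<le> indicator A x *\<^sub>R \<phi> x" for x
    using nonneg by (simp add: indicator_def)
  have eq: "(\<integral>\<^sup>+x. ennreal (indicator A x *\<^sub>R \<phi> x) \<partial>M) = (\<integral>\<^sup>+x\<in>A. ennreal (\<phi> x) \<partial>M)"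
    by (intro nn_integral_cong) (simp add: indicator_def)
  show int: "set_integrable M A \<phi>"
    unfolding set_integrable_def
    using meas finite nonneg' eq by (intro integrableI_bounded) (auto simp: set_borel_measurable_def)
  show "(\<integral>\<^sup>+x\<in>A. ennreal (\<phi> x) \<partial>M) = ennreal (LINT x:A|M. \<phi> x)"
    using int nonneg' unfolding set_integrable_def set_lebesgue_integral_def eq[symmetric]
    by (intro nn_integral_eq_integral) auto
qed

lemma set_nn_integral_le_of_set_integral_diff_nonneg:
  fixes \<phi> \<psi> :: "'a \<Rightarrow> real"
  assumes "set_borel_measurable M A \<phi>" "\<And>x. x \<in> A \<Longrightarrow> 0 \<le> \<phi> x" "(\<integral>\<^sup>+x\<in>A. ennreal (\<phi> x) \<partial>M) < \<infinity>"
    and "set_borel_measurable M A \<psi>" "\<And>x. x \<in> A \<Longrightarrow> 0 \<le> \<psi> x" "(\<integral>\<^sup>+x\<in>A. ennreal (\<psi> x) \<partial>M) < \<infinity>"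
    and "0 \<le> (LINT x:A|M. \<phi> x - \<psi> x)"
  shows "(\<integral>\<^sup>+x\<in>A. ennreal (\<psi> x) \<partial>M) \<le> (\<integral>\<^sup>+x\<in>A. ennreal (\<phi> x) \<partial>M)"
proof -
  note \<phi> = set_nn_integral_eq_set_integral[OF assms(1-3)]
  note \<psi> = set_nn_integral_eq_set_integral[OF assms(4-6)]
  have "(LINT x:A|M. \<psi> x) \<le> (LINT x:A|M. \<phi> x)"
    using assms(7) set_integral_diff(2)[OF \<phi>(1) \<psi>(1)] by simp
  then show ?thesis
    using \<phi>(2) \<psi>(2) by (simp add: ennreal_leI)
qed

lemma distr_fun_nonneg: "0 \<le> distr_fun M h t"
  by (simp add: distr_fun_def)

lemma borel_measurable_antimono_on_pos:
  fixes u :: "real \<Rightarrow> real"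
  assumes "\<And>x y. 0 < x \<Longrightarrow> x \<le> y \<Longrightarrow> u y \<le> u x"
  shows "(\<lambda>s. u s * indicator {0<..} s) \<in> borel_measurable borel"
proof -
  have "(\<lambda>s. - u s) \<in> borel_measurable (restrict_space borel {0<..})"
    using assms by (intro borel_measurable_mono_on_fnc) (auto simp: mono_on_def)
  then have "u \<in> borel_measurable (restrict_space borel {0<..})"
    using borel_measurable_uminus by fastforce
  then have "(\<lambda>s. indicator {0<..} s *\<^sub>R u s) \<in> borel_measurable borel"
    by (subst (asm) borel_measurable_restrict_space_iff) auto
  then show ?thesis by (simp add: mult.commute)
qed

definition distr_tail :: "'a measure \<Rightarrow> ('a \<Rightarrow> real) \<Rightarrow> real \<Rightarrow> real \<Rightarrow> ennreal" where
  "distr_tail M h r t = (\<integral>\<^sup>+s\<in>{t..}. ennreal (distr_fun M h s powr r) \<partial>lborel)"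

context
  fixes M :: "'a measure" and h :: "'a \<Rightarrow> real"
  assumes h_measurable: "h \<in> borel_measurable M"
    and finite_support: "emeasure M {x \<in> space M. h x \<noteq> 0} < \<infinity>"
begin

lemma superlevel_set_fmeasurable:
  assumes "0 \<le> t"
  shows "{x \<in> space M. t < \<bar>h x\<bar>} \<in> fmeasurable M"
proof -
  have "emeasure M {x \<in> space M. t < \<bar>h x\<bar>} \<le> emeasure M {x \<in> space M. h x \<noteq> 0}"
    using assms h_measurable by (intro emeasure_mono) auto
  then show ?thesis
    using finite_support h_measurable by (auto simp: fmeasurable_def)
qed

lemma distr_fun_antimono: "0 \<le> s \<Longrightarrow> s \<le> t \<Longrightarrow> distr_fun M h t \<le> distr_fun M h s"
  unfolding distr_fun_def
  by (rule measure_mono_fmeasurable) (use h_measurable superlevel_set_fmeasurable in auto)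

lemma distr_fun_le_support: "0 \<le> t \<Longrightarrow> distr_fun M h t \<le> measure M {x \<in> space M. h x \<noteq> 0}"
  unfolding distr_fun_def
  using finite_support h_measurable by (intro measure_mono_fmeasurable) (auto simp: fmeasurable_def)

lemma distr_fun_right_continuous:
  assumes "0 \<le> t"
  shows "(\<lambda>n. distr_fun M h (t + 1 / Suc n)) \<longlonglongrightarrow> distr_fun M h t"
proof -
  define A where "A n = {x \<in> space M. t + 1 / Suc n < \<bar>h x\<bar>}" for n :: nat
  have union: "(\<Union>n. A n) = {x \<in> space M. t < \<bar>h x\<bar>}"
  proof safe
    fix x assume x: "x \<in> space M" "t < \<bar>h x\<bar>"
    then obtain n where "1 / Suc n < \<bar>h x\<bar> - t"
      by (metis diff_gt_0_iff_gt nat_approx_posE)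
    then have "t + 1 / Suc n < \<bar>h x\<bar>" by simp
    with x show "x \<in> (\<Union>n. A n)" unfolding A_def by blast
  next
    fix x n assume "x \<in> A n"
    then show "x \<in> space M" "t < \<bar>h x\<bar>"
      by (auto simp: A_def) (smt (verit) of_nat_0_le_iff divide_nonneg_nonneg)
  qed
  have "(\<lambda>n. measure M (A n)) \<longlonglongrightarrow> measure M (\<Union>n. A n)"
  proof (rule Lim_measure_incseq)
    show "range A \<subseteq> sets M" using h_measurable by (auto simp: A_def)
    show "incseq A"
    proof (rule incseq_SucI)
      fix n
      have "1 / real (Suc (Suc n)) \<le> 1 / Suc n" by (simp add: frac_le)
      then show "A n \<subseteq> A (Suc n)" by (auto simp: A_def)
    qed
    show "emeasure M (\<Union>n. A n) \<noteq> \<infinity>"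
      unfolding union using superlevel_set_fmeasurable[OF assms] by (auto simp: fmeasurable_def)
  qed
  then have "(\<lambda>n. measure M (A n)) \<longlonglongrightarrow> measure M {x \<in> space M. t < \<bar>h x\<bar>}"
    by (simp only: union)
  then show ?thesis by (simp add: A_def distr_fun_def)
qed

lemma distr_fun_tendsto_zero: "(\<lambda>n. distr_fun M h (real n)) \<longlonglongrightarrow> 0"
proof -
  define A where "A n = {x \<in> space M. real n < \<bar>h x\<bar>}" for n :: nat
  have "(\<Inter>n. A n) = {}"
    by (auto simp: A_def) (meson less_asym reals_Archimedean2)
  moreover have "(\<lambda>n. measure M (A n)) \<longlonglongrightarrow> measure M (\<Inter>n. A n)"
  proof (rule Lim_measure_decseq)
    show "range A \<subseteq> sets M" using h_measurable by (auto simp: A_def)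
    show "decseq A" by (rule decseq_SucI) (auto simp: A_def)
    show "emeasure M (A n) \<noteq> \<infinity>" for n
      using superlevel_set_fmeasurable[of "real n"] by (auto simp: fmeasurable_def A_def)
  qed
  ultimately show ?thesis by (simp add: A_def distr_fun_def)
qed

lemma ex_distr_fun_le: "0 < s \<Longrightarrow> \<exists>\<tau>>0. distr_fun M h \<tau> \<le> s"
proof -
  assume "0 < s"
  from order_tendstoD(2)[OF distr_fun_tendsto_zero this]
  obtain N where N: "\<And>n. n \<ge> N \<Longrightarrow> distr_fun M h (real n) < s"
    by (auto simp: eventually_sequentially)
  have "distr_fun M h (real (Suc N)) < s" by (rule N) simp
  then show ?thesis by (intro exI[of _ "real (Suc N)"]) auto
qed

lemma rearr_nonneg: "0 < s \<Longrightarrow> 0 \<le> rearr M h s"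
  unfolding rearr_def using ex_distr_fun_le by (intro cInf_greatest) auto

lemma rearr_antimono: "0 < s \<Longrightarrow> s \<le> s' \<Longrightarrow> rearr M h s' \<le> rearr M h s"
  unfolding rearr_def using ex_distr_fun_le
  by (intro cInf_superset_mono) (auto intro: bdd_belowI[of _ 0])

text \<open>Right continuity of the distribution function makes the rearrangement its exact
  generalized inverse.\<close>
lemma less_rearr_iff:
  assumes s: "0 < s" and t: "0 < t"
  shows "t < rearr M h s \<longleftrightarrow> s < distr_fun M h t"
proof
  assume "t < rearr M h s"
  show "s < distr_fun M h t"
  proof (rule ccontr)
    assume "\<not> s < distr_fun M h t"
    then have "rearr M h s \<le> t"
      unfolding rearr_def using t by (intro cInf_lower) (auto intro: bdd_belowI[of _ 0])
    with \<open>t < rearr M h s\<close> show False by simp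
  qed
next
  assume "s < distr_fun M h t"
  from order_tendstoD(1)[OF distr_fun_right_continuous this] t
  obtain n where n: "s < distr_fun M h (t + 1 / Suc n)"
    by (auto simp: eventually_sequentially)
  show "t < rearr M h s"
  proof (rule ccontr)
    assume "\<not> t < rearr M h s"
    then have "rearr M h s < t + 1 / Suc n"
      by (smt (verit) of_nat_0_less_iff zero_less_Suc divide_pos_pos)
    then obtain \<tau> where \<tau>: "\<tau> > 0" "distr_fun M h \<tau> \<le> s" "\<tau> < t + 1 / Suc n"
      unfolding rearr_def using ex_distr_fun_le[OF s]
      by (subst (asm) cInf_less_iff) (auto intro: bdd_belowI[of _ 0])
    then have "distr_fun M h (t + 1 / Suc n) \<le> distr_fun M h \<tau>"
      by (intro distr_fun_antimono) auto
    with \<tau> n show False by simp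
  qed
qed

lemma borel_measurable_distr_fun [measurable]: "distr_fun M h \<in> borel_measurable borel"
proof -
  have "(\<lambda>s. - distr_fun M h s) \<in> borel_measurable borel"
  proof (rule borel_measurable_piecewise_mono[of "{{..<0},{0..}}"])
    fix c :: "real set" assume c: "c \<in> {{..<0},{0..}}"
    have const: "distr_fun M h s = distr_fun M h s'" if "s < 0" "s' < 0" for s s'
    proof -
      have "{x \<in> space M. s < \<bar>h x\<bar>} = {x \<in> space M. s' < \<bar>h x\<bar>}" using that by auto
      then show ?thesis unfolding distr_fun_def by simp
    qed
    show "mono_on c (\<lambda>s. - distr_fun M h s)"
    proof (rule mono_onI)
      fix x y assume "x \<in> c" "y \<in> c" "x \<le> y"
      with c show "- distr_fun M h x \<le> - distr_fun M h y"
        using const[of x y] distr_fun_antimono[of x y] by auto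
    qed
  qed auto
  then show ?thesis
    using borel_measurable_uminus by fastforce
qed

lemma borel_measurable_rearr_on_pos: "(\<lambda>s. rearr M h s * indicator {0<..} s) \<in> borel_measurable borel"
  using rearr_antimono by (intro borel_measurable_antimono_on_pos) auto

lemma borel_measurable_distr_tail [measurable]: "distr_tail M h r \<in> borel_measurable borel"
proof -
  have "distr_tail M h r = (\<lambda>t. \<integral>\<^sup>+s. ennreal (distr_fun M h s powr r) * indicator {0..} (s - t) \<partial>lborel)"
    unfolding distr_tail_def by (intro ext nn_integral_cong) (auto split: split_indicator)
  also have "\<dots> \<in> borel_measurable borel"
    by measurable
  finally show ?thesis .
qed

lemma lorentz_integral_eq_distr_integral:
  assumes "0 < p" "0 < q"
  shows "lorentz_integral M p q h
    = (\<integral>\<^sup>+t\<in>{0<..}. ennreal (q * t powr (q - 1) * distr_fun M h t powr (q / p)) \<partial>lborel)"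
  unfolding lorentz_integral_def
proof (rule layer_cake_generalized_inverse)
  show "(\<lambda>t. distr_fun M h t * indicator {0<..} t) \<in> borel_measurable borel"
    by measurable
  show "\<And>s t. 0 < s \<Longrightarrow> 0 < t \<Longrightarrow> t < rearr M h s \<longleftrightarrow> s < distr_fun M h t"
    by (rule less_rearr_iff)
qed (use assms rearr_nonneg distr_fun_nonneg in auto)

lemma lorentz_integral_eq_tail_integral:
  assumes "0 < p" "1 < q"
  shows "lorentz_integral M p q h
    = (\<integral>\<^sup>+t\<in>{0<..}. ennreal (q * (q - 1) * t powr (q - 2)) * distr_tail M h (q / p) t \<partial>lborel)"
  unfolding lorentz_integral_eq_distr_integral[OF assms(1) order.strict_trans[OF zero_less_one assms(2)]]
    distr_tail_def
  using assms(2)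
  by (intro nn_integral_power_weight_eq_tail) auto

text \<open>Near the origin the distribution function is bounded by the measure of the support; away
  from it the smaller power of t is dominated by the larger one.\<close>
lemma lorentz_integral_finite_smaller_exponent:
  assumes "0 < p0" "0 < p" "1 \<le> q0" "q0 \<le> q" "q0 / p0 = q / p"
    and finite: "lorentz_integral M p q h < \<infinity>"
  shows "lorentz_integral M p0 q0 h < \<infinity>"
proof -
  define r where "r = q / p"
  define C where "C = measure M {x \<in> space M. h x \<noteq> 0}"
  have "0 < r" "0 < q0" "0 < q" using assms by (auto simp: r_def)
  have bound: "ennreal (q0 * t powr (q0 - 1) * distr_fun M h t powr r) * indicator {0<..} t
     \<le> ennreal (q0 * C powr r) * indicator {0<..1} t
       + ennreal (q0 / q) * (ennreal (q * t powr (q - 1) * distr_fun M h t powr r) * indicator {0<..} t)" for t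
  proof (cases "0 < t")
    case True
    have "0 \<le> distr_fun M h t" "distr_fun M h t \<le> C"
      using True distr_fun_le_support by (auto simp: distr_fun_nonneg C_def)
    show ?thesis
    proof (cases "t \<le> 1")
      case small: True
      have "t powr (q0 - 1) \<le> 1"
        using True small assms(3) by (intro powr_le1) auto
      moreover have "distr_fun M h t powr r \<le> C powr r"
        using \<open>0 \<le> distr_fun M h t\<close> \<open>distr_fun M h t \<le> C\<close> \<open>0 < r\<close> by (intro powr_mono2) auto
      ultimately have "q0 * t powr (q0 - 1) * distr_fun M h t powr r \<le> q0 * C powr r"
        using \<open>0 < q0\<close> by (simp add: mult_left_mono mult_le_one mult_mono)
      then show ?thesis using True small by (simp add: add_increasing2 ennreal_leI)
    next
      case large: False
      have "t powr (q0 - 1) \<le> t powr (q - 1)" using large assms(4) by (intro powr_mono) auto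
      then have "q0 * t powr (q0 - 1) * distr_fun M h t powr r \<le> (q0 / q) * (q * t powr (q - 1) * distr_fun M h t powr r)"
        using \<open>0 < q0\<close> \<open>0 < q\<close> by (simp add: mult_left_mono mult_right_mono)
      then show ?thesis
        using True large \<open>0 < q0\<close> \<open>0 < q\<close> by (simp add: add_increasing ennreal_leI ennreal_mult[symmetric])
    qed
  qed simp
  have "lorentz_integral M p0 q0 h
      = (\<integral>\<^sup>+t\<in>{0<..}. ennreal (q0 * t powr (q0 - 1) * distr_fun M h t powr r) \<partial>lborel)"
    using assms \<open>0 < q0\<close> by (simp add: lorentz_integral_eq_distr_integral r_def)
  also have "\<dots> \<le> (\<integral>\<^sup>+t. ennreal (q0 * C powr r) * indicator {0<..1} t
       + ennreal (q0 / q) * (ennreal (q * t powr (q - 1) * distr_fun M h t powr r) * indicator {0<..} t) \<partial>lborel)"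
    by (rule nn_integral_mono) (rule bound)
  also have "\<dots> = ennreal (q0 * C powr r) + ennreal (q0 / q) * lorentz_integral M p q h"
    using assms \<open>0 < q\<close>
    by (subst nn_integral_add) (auto simp: nn_integral_cmult lorentz_integral_eq_distr_integral r_def)
  also have "\<dots> < \<infinity>" using finite by (simp add: ennreal_mult_less_top)
  finally show ?thesis .
qed

lemma distr_tail_finite:
  assumes "0 < p" "1 \<le> q" and finite: "lorentz_integral M p q h < \<infinity>" and "0 < t"
  shows "distr_tail M h (q / p) t < \<infinity>"
proof -
  have "ennreal (q * t powr (q - 1)) * distr_tail M h (q / p) t
      = (\<integral>\<^sup>+s\<in>{t..}. ennreal (q * t powr (q - 1)) * ennreal (distr_fun M h s powr (q / p)) \<partial>lborel)"
    unfolding distr_tail_def by (subst nn_integral_cmult[symmetric]) (auto simp: mult.assoc)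
  also have "\<dots> \<le> lorentz_integral M p q h"
    unfolding lorentz_integral_eq_distr_integral[OF assms(1) order.strict_trans2[OF zero_less_one assms(2)]]
  proof (rule nn_integral_mono)
    fix s
    have "t \<le> s \<Longrightarrow> t powr (q - 1) \<le> s powr (q - 1)"
      using assms by (intro powr_mono2) auto
    then show "ennreal (q * t powr (q - 1)) * ennreal (distr_fun M h s powr (q / p)) * indicator {t..} s
        \<le> ennreal (q * s powr (q - 1) * distr_fun M h s powr (q / p)) * indicator {0<..} s"
      using assms by (auto simp: indicator_def ennreal_mult[symmetric] intro!: ennreal_leI mult_right_mono)
  qed
  finally have "ennreal (q * t powr (q - 1)) * distr_tail M h (q / p) t < \<infinity>"
    using finite by (rule le_less_trans)
  then show ?thesis
    using assms by (auto simp: ennreal_mult_less_top)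
qed

end

lemma lorentz_integral_le_of_integral_diff_nonneg:
  assumes "f \<in> borel_measurable M" "emeasure M {x \<in> space M. f x \<noteq> 0} < \<infinity>"
    and "g \<in> borel_measurable M" "emeasure M {x \<in> space M. g x \<noteq> 0} < \<infinity>"
    and "0 < p" "0 < q" "lorentz_integral M p q f < \<infinity>" "lorentz_integral M p q g < \<infinity>"
    and "0 \<le> (LINT t:{0<..}|lborel.
           (rearr M f t powr q - rearr M g t powr q) * ((q / p) * t powr (q / p - 1)))"
  shows "lorentz_integral M p q g \<le> lorentz_integral M p q f"
proof -
  define w where "w t = (q / p) * t powr (q / p - 1)" for t :: real
  have lorentz_eq: "lorentz_integral M p q h = (\<integral>\<^sup>+t\<in>{0<..}. ennreal (rearr M h t powr q * w t) \<partial>lborel)" for h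
    by (simp add: lorentz_integral_def w_def)
  have meas: "set_borel_measurable lborel {0<..} (\<lambda>t. rearr M h t powr q * w t)"
    if "h \<in> borel_measurable M" "emeasure M {x \<in> space M. h x \<noteq> 0} < \<infinity>" for h
  proof -
    note [measurable] = borel_measurable_rearr_on_pos[OF that]
    have "(\<lambda>t. (rearr M h t * indicator {0<..} t) powr q * w t * indicator {0<..} t) \<in> borel_measurable lborel"
      unfolding w_def by measurable
    then show ?thesis
      unfolding set_borel_measurable_def by (rule measurable_cong[THEN iffD1, rotated]) (simp add: indicator_def)
  qed
  have diff: "(\<lambda>t. rearr M f t powr q * w t - rearr M g t powr q * w t)
      = (\<lambda>t. (rearr M f t powr q - rearr M g t powr q) * ((q / p) * t powr (q / p - 1)))"
    by (simp add: w_def fun_eq_iff left_diff_distrib diff_divide_distrib)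
  show ?thesis
    unfolding lorentz_eq
  proof (rule set_nn_integral_le_of_set_integral_diff_nonneg[OF meas[OF assms(1,2)] _ _ meas[OF assms(3,4)]])
    show "0 \<le> (LINT t:{0<..}|lborel. rearr M f t powr q * w t - rearr M g t powr q * w t)"
      unfolding diff by (rule assms(9))
  qed (use assms(5-8) in \<open>simp_all add: lorentz_eq w_def\<close>)
qed

theorem mainTheorem5:
  fixes M :: "'a measure" and f g :: "'a \<Rightarrow> real" and p0 p q0 q \<tau>1 :: real
  assumes "0 < p0" "0 < p" "1 < q0" "q0 < q" "q / p = q0 / p0"
    and "f \<in> borel_measurable M" "g \<in> borel_measurable M"
    and "emeasure M {x \<in> space M. f x \<noteq> 0} < \<infinity>"
    and "emeasure M {x \<in> space M. g x \<noteq> 0} < \<infinity>"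
    and "in_lorentz M p q f" "in_lorentz M p q g"
    and "set_integrable lborel {0<..}
           (\<lambda>t. (rearr M f t powr q0 - rearr M g t powr q0) * ((q0 / p0) * t powr (q0 / p0 - 1)))"
    and "(LINT t:{0<..}|lborel.
           (rearr M f t powr q0 - rearr M g t powr q0) * ((q0 / p0) * t powr (q0 / p0 - 1))) \<ge> 0"
    and "0 \<le> \<tau>1"
    and "\<And>\<tau>. \<tau> \<ge> \<tau>1 \<Longrightarrow>
           (\<integral>\<^sup>+ s. ennreal (distr_fun M g s powr (q0 / p0)) * indicator {\<tau>..} s \<partial>lborel)
         \<le> (\<integral>\<^sup>+ s. ennreal (distr_fun M f s powr (q0 / p0)) * indicator {\<tau>..} s \<partial>lborel)"
    and "\<And>\<tau>. 0 \<le> \<tau> \<Longrightarrow> \<tau> \<le> \<tau>1 \<Longrightarrow>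
           (\<integral>\<^sup>+ s. ennreal (distr_fun M f s powr (q0 / p0)) * indicator {\<tau>..} s \<partial>lborel)
         \<le> (\<integral>\<^sup>+ s. ennreal (distr_fun M g s powr (q0 / p0)) * indicator {\<tau>..} s \<partial>lborel)"
  shows "lorentz_norm M p q g \<le> lorentz_norm M p q f"
proof -
  \<comment> \<open>The integrability hypothesis is implied by the finiteness of both Lorentz integrals
    at exponent q0, which follows from the one at q.\<close>
  note f = assms(6,8) and g = assms(7,9)
  have "1 < q" using assms(3,4) by simp
  note tail_q = lorentz_integral_eq_tail_integral[OF _ _ assms(2) \<open>1 < q\<close>, unfolded assms(5)]
  note tail_q0 = lorentz_integral_eq_tail_integral[OF _ _ assms(1,3)]
  have finite_q: "lorentz_integral M p q f < \<infinity>" "lorentz_integral M p q g < \<infinity>"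
    using assms(10,11) by (simp_all add: in_lorentz_def)
  note finite_q0 = lorentz_integral_finite_smaller_exponent[OF _ _ assms(1,2) less_imp_le[OF assms(3)]
      less_imp_le[OF assms(4)] assms(5)[symmetric]]
  note finite_tail = distr_tail_finite[OF _ _ assms(2) less_imp_le[OF \<open>1 < q\<close>], unfolded assms(5)]
  have "lorentz_integral M p0 q0 g \<le> lorentz_integral M p0 q0 f"
    using assms(1,3,13) finite_q0[OF f finite_q(1)] finite_q0[OF g finite_q(2)]
    by (intro lorentz_integral_le_of_integral_diff_nonneg[OF f g]) auto
  note le_q0 = this[unfolded tail_q0[OF f] tail_q0[OF g]]
  have below: "distr_tail M f (q0 / p0) t \<le> distr_tail M g (q0 / p0) t" if "0 < t" "t \<le> \<tau>1" for t
    using assms(16) that by (simp add: distr_tail_def)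
  have "lorentz_integral M p q g \<le> lorentz_integral M p q f"
    unfolding tail_q[OF f] tail_q[OF g]
    by (rule nn_integral_power_weight_le_sign_change[OF borel_measurable_distr_tail[OF f]
          borel_measurable_distr_tail[OF g] assms(3,4,14) finite_tail[OF f finite_q(1)]
          finite_tail[OF g finite_q(2)] assms(15)[folded distr_tail_def] below le_q0
          finite_q0[OF f finite_q(1), unfolded tail_q0[OF f]] finite_q(2)[unfolded tail_q[OF g]]])
  then show ?thesis
    unfolding lorentz_norm_def using \<open>1 < q\<close> finite_q
    by (intro powr_mono2 enn2real_mono) auto
qed

end
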